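(* Let $\mathfrak{n}=(V,\{\,,\})$ be a $2$-step nilpotent Lie algebra over $K$ with $Z(\mathfrak{n})\subseteq\{\mathfrak{n},\mathfrak{n}\}$, and let $x* y$ be an LR-structure on $\mathfrak{n}$ satisfying $\{\mathfrak{n},\mathfrak{n}\}*\mathfrak{n}=0$. Then the LR-structure is complete, i.e. all left multiplications $y\mapsto x*y$ are nilpotent.
   Context: $K$ is a field of characteristic zero, $V$ a finite-dimensional $K$-vector space. An LR-structure on a Lie algebra $\mathfrak{n}=(V,\{\,,\})$ is a bilinear product $x*y$ on $V$ such that for all $x,y,z\in V$: $x*y-y*x=\{x,y\}$, $x*(y*z)=y*(x*z)$, and $x*\{y,z\}=\{x*y,z\}+\{y,x*z\}$ (equivalently, $x\cdot y:=-x*y$ is a post-Lie algebra structure on the pair (abelian Lie algebra on $V$, $\mathfrak{n}$)). $Z(\mathfrak{n})$ is the center, $\{\mathfrak{n},\mathfrak{n}\}$ the derived algebra. A Lie algebra is called $2$-step nilpotent here if it is nilpotent of class at most $2$. *)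

theory Defs
  imports Complex_Main
begin

definition bilinear_on :: "('k::field \<Rightarrow> 'v::ab_group_add \<Rightarrow> 'v) \<Rightarrow> ('v \<Rightarrow> 'v \<Rightarrow> 'v) \<Rightarrow> bool" where
  "bilinear_on scale m \<longleftrightarrow>
     (\<forall>x y z. m (x + y) z = m x z + m y z) \<and>
     (\<forall>x y z. m x (y + z) = m x y + m x z) \<and>
     (\<forall>a x y. m (scale a x) y = scale a (m x y)) \<and>
     (\<forall>a x y. m x (scale a y) = scale a (m x y))"

definition lie_algebra :: "('k::field \<Rightarrow> 'v::ab_group_add \<Rightarrow> 'v) \<Rightarrow> ('v \<Rightarrow> 'v \<Rightarrow> 'v) \<Rightarrow> bool" where
  "lie_algebra scale br \<longleftrightarrow> bilinear_on scale br \<and>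
     (\<forall>x. br x x = 0) \<and>
     (\<forall>x y z. br x (br y z) + br y (br z x) + br z (br x y) = 0)"

definition two_step_nilpotent :: "('v::ab_group_add \<Rightarrow> 'v \<Rightarrow> 'v) \<Rightarrow> bool" where
  "two_step_nilpotent br \<longleftrightarrow> (\<forall>x y z. br (br x y) z = 0)"

definition lie_center :: "('v::ab_group_add \<Rightarrow> 'v \<Rightarrow> 'v) \<Rightarrow> 'v set" where
  "lie_center br = {z. \<forall>x. br z x = 0}"

definition derived_algebra :: "('k::field \<Rightarrow> 'v::ab_group_add \<Rightarrow> 'v) \<Rightarrow> ('v \<Rightarrow> 'v \<Rightarrow> 'v) \<Rightarrow> 'v set" where
  "derived_algebra scale br = module.span scale {br x y | x y. True}"

definition LR_structure :: "('k::field \<Rightarrow> 'v::ab_group_add \<Rightarrow> 'v) \<Rightarrow> ('v \<Rightarrow> 'v \<Rightarrow> 'v) \<Rightarrow> ('v \<Rightarrow> 'v \<Rightarrow> 'v) \<Rightarrow> bool" where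
  "LR_structure scale br m \<longleftrightarrow> bilinear_on scale m \<and>
     (\<forall>x y. m x y - m y x = br x y) \<and>
     (\<forall>x y z. m x (m y z) = m y (m x z)) \<and>
     (\<forall>x y z. m x (br y z) = br (m x y) z + br y (m x z))"

definition LR_complete :: "('v::zero \<Rightarrow> 'v \<Rightarrow> 'v) \<Rightarrow> bool" where
  "LR_complete m \<longleftrightarrow> (\<forall>x. \<exists>k. ((\<lambda>y. m x y) ^^ k) = (\<lambda>_. 0))"

end

theory Submission
  imports Defs
begin

text \<open>
  Left multiplications \<open>L\<^sub>x y = x * y\<close> commute, brackets are central, and the centre
  acts trivially from both sides; hence \<open>w * (x * y) = w * (y * x)\<close>. With the derivation
  rule this forces every idempotent \<open>e = e * e\<close> into the centre (characteristic \<open>\<noteq> 2\<close>),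
  so \<open>e = e * e = 0\<close>. Fitting's argument for \<open>L = L\<^sub>x\<close>: once the images \<open>L\<^bsup>n\<^esup> V\<close>
  stabilise at \<open>n = N\<close>, write \<open>L\<^bsup>N+1\<^esup> x = L\<^bsup>2N+4\<^esup> c\<close>; then \<open>e = L\<^bsup>N+2\<^esup> c\<close> is
  idempotent, so \<open>L\<^bsup>N+1\<^esup> x = L\<^bsup>N+2\<^esup> e = 0\<close> and
  \<open>L\<^bsup>N+2\<^esup> y = L\<^bsup>N+1\<^esup> (y * x) = y * L\<^bsup>N+1\<^esup> x = 0\<close>.
\<close>

lemma (in vector_space) linear_funpow:
  assumes "Vector_Spaces.linear scale scale f"
  shows "Vector_Spaces.linear scale scale (f ^^ n)"
proof (induction n)
  case 0
  then show ?case using linear_id by (simp add: id_def)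
next
  case (Suc n)
  then show ?case using Vector_Spaces.linear_compose[OF Suc assms] by (simp add: comp_def)
qed

lemma (in finite_dimensional_vector_space) range_funpow_stabilizes:
  assumes "Vector_Spaces.linear scale scale f"
  shows "\<exists>N. \<forall>n\<ge>N. range (f ^^ n) = range (f ^^ N)"
proof -
  have subspace: "subspace (range (f ^^ n))" for n
    by (metis module_hom_iff_linear module_hom.subspace_image linear_funpow[OF assms] subspace_UNIV)
  obtain N where N: "\<And>n. dim (range (f ^^ N)) \<le> dim (range (f ^^ n))"
    using ex_has_least_nat[where P = "\<lambda>_. True" and m = "\<lambda>n. dim (range (f ^^ n))"] by blast
  have "range (f ^^ n) = range (f ^^ N)" if "N \<le> n" for n
  proof (rule subspace_dim_equal)
    obtain k where "n = N + k" using \<open>N \<le> n\<close> le_Suc_ex by blast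
    then show "range (f ^^ n) \<subseteq> range (f ^^ N)" by (auto simp: funpow_add)
  qed (use subspace N in auto)
  then show ?thesis by blast
qed

lemma vector_space_add_self_eq_0:
  fixes scale :: "'k::field_char_0 \<Rightarrow> 'v::ab_group_add \<Rightarrow> 'v"
    and x :: 'v
  assumes "vector_space scale"
  shows "x + x = 0 \<longleftrightarrow> x = 0"
proof -
  interpret vector_space scale by (rule assms)
  have "x + x = scale 2 x"
    using scale_left_distrib[of 1 1 x] by simp
  then show ?thesis by simp
qed

locale two_step_LR = vector_space scale
  for scale :: "'k::field_char_0 \<Rightarrow> 'v::ab_group_add \<Rightarrow> 'v" +
  fixes br m :: "'v \<Rightarrow> 'v \<Rightarrow> 'v"
  assumes lie: "lie_algebra scale br"
    and two_step: "two_step_nilpotent br"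
    and LR: "LR_structure scale br m"
    and center_mult: "u \<in> lie_center br \<Longrightarrow> m u y = 0"
begin

lemma mult_add_right: "m x (y + z) = m x y + m x z"
  and mult_scale_right: "m x (scale a y) = scale a (m x y)"
  and mult_commutator: "m x y - m y x = br x y"
  and mult_left_commute: "m x (m y z) = m y (m x z)"
  and mult_bracket: "m x (br y z) = br (m x y) z + br y (m x z)"
  using LR unfolding LR_structure_def bilinear_on_def by blast+

lemma bracket_add_left: "br (x + y) z = br x z + br y z"
  and bracket_add_right: "br x (y + z) = br x y + br x z"
  and bracket_self: "br x x = 0"
  using lie unfolding lie_algebra_def bilinear_on_def by blast+

lemma bracket_antisym: "br x y = - br y x"
proof -
  have "0 = br (x + y) (x + y)" by (rule bracket_self[symmetric])
  also have "\<dots> = br x y + br y x"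
    by (simp only: bracket_add_left bracket_add_right) (simp add: bracket_self)
  finally show ?thesis by (simp add: eq_neg_iff_add_eq_0)
qed

lemma bracket_in_center: "br x y \<in> lie_center br"
  using two_step unfolding two_step_nilpotent_def lie_center_def by blast

lemma bracket_center: "u \<in> lie_center br \<Longrightarrow> br x u = 0"
  using bracket_antisym[of x u] unfolding lie_center_def by simp

lemma mult_center: "u \<in> lie_center br \<Longrightarrow> m y u = 0"
  using mult_commutator[of u y] center_mult[of u y] unfolding lie_center_def by simp

lemma mult_mult_commute: "m w (m x y) = m w (m y x)"
proof -
  have "m w (m x y) - m w (m y x) = m w (br x y)"
    by (metis mult_commutator mult_add_right diff_add_cancel eq_diff_eq)
  also have "\<dots> = 0" by (rule mult_center[OF bracket_in_center])
  finally show ?thesis by simp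
qed

lemma idempotent_in_center:
  assumes idem: "m e e = e"
  shows "e \<in> lie_center br"
proof -
  have derivation: "br e z + br e (m e z) = 0" for z
    using mult_bracket[of e e z] mult_center[OF bracket_in_center] idem by simp
  have "br e (m e (m e z)) = br e (m e z)" for z
  proof -
    have "m e (m e z) = m z e"
      using mult_mult_commute[of e e z] mult_left_commute[of e z e] idem by simp
    moreover have "br e (m z e) = br e (m e z)"
      using bracket_add_right[of e "m z e" "br e z"] mult_commutator[of e z]
        bracket_center[OF bracket_in_center] by (simp add: algebra_simps)
    ultimately show ?thesis by simp
  qed
  then have "br e (m e z) + br e (m e z) = 0" for z
    using derivation[of "m e z"] by simp
  then have "br e (m e z) = 0" for z
    using vector_space_add_self_eq_0[OF vector_space_axioms] by blast
  then have "br e z = 0" for z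
    using derivation[of z] by simp
  then show ?thesis unfolding lie_center_def by blast
qed

lemma idempotent_eq_0: "m e e = e \<Longrightarrow> e = 0"
  using mult_center[OF idempotent_in_center] by metis

lemma linear_mult: "Vector_Spaces.linear scale scale (m x)"
  unfolding Vector_Spaces.linear_iff using vector_space_axioms mult_add_right mult_scale_right by blast

lemma mult_zero_right: "m x 0 = 0"
  using mult_add_right[of x 0 0] by simp

lemma funpow_mult_0: "(m x ^^ n) 0 = 0"
  by (induction n) (simp_all add: mult_zero_right)

lemma mult_funpow_commute: "m w ((m x ^^ n) y) = (m x ^^ n) (m w y)"
proof (induction n)
  case (Suc n)
  have "m w (m x ((m x ^^ n) y)) = m x (m w ((m x ^^ n) y))" by (rule mult_left_commute)
  then show ?case using Suc by simp
qed simp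

lemma funpow_Suc_mult_commute: "(m x ^^ Suc n) (m a b) = (m x ^^ Suc n) (m b a)"
  by (simp only: funpow_Suc_right comp_apply mult_mult_commute)

lemma funpow_idempotent:
  assumes "(m x ^^ Suc n) x = (m x ^^ (Suc (Suc n) + Suc (Suc n))) c"
  defines "e \<equiv> (m x ^^ Suc (Suc n)) c"
  shows "m e e = e"
proof -
  let ?L = "m x"
  have "m e e = (?L ^^ Suc (Suc n)) (m c e)"
    by (simp only: e_def mult_funpow_commute funpow_Suc_mult_commute)
  also have "\<dots> = (?L ^^ (Suc (Suc n) + Suc (Suc n))) (m c c)"
    by (simp only: e_def mult_funpow_commute funpow_add comp_apply)
  also have "\<dots> = m c ((?L ^^ Suc n) x)"
    by (simp only: assms(1) mult_funpow_commute)
  also have "\<dots> = (?L ^^ Suc n) (m x c)"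
    by (simp only: mult_funpow_commute funpow_Suc_mult_commute)
  also have "\<dots> = e"
    by (simp only: e_def funpow_Suc_right[of "Suc n"] comp_apply)
  finally show ?thesis .
qed

lemma nilpotent_if_funpow_self_0:
  assumes "(m x ^^ Suc n) x = 0"
  shows "m x ^^ Suc (Suc n) = (\<lambda>_. 0)"
proof
  fix y
  have "(m x ^^ Suc (Suc n)) y = (m x ^^ Suc n) (m y x)"
    by (simp only: funpow_Suc_right[of "Suc n"] comp_apply funpow_Suc_mult_commute)
  also have "\<dots> = 0"
    by (simp only: mult_funpow_commute[symmetric] assms mult_zero_right)
  finally show "(m x ^^ Suc (Suc n)) y = 0" .
qed

lemma nilpotent_if_range_funpow_stable:
  assumes "\<forall>n\<ge>N. range (m x ^^ n) = range (m x ^^ N)"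
  shows "m x ^^ Suc (Suc N) = (\<lambda>_. 0)"
proof (rule nilpotent_if_funpow_self_0)
  let ?M = "Suc (Suc N)"
  have "range (m x ^^ (?M + ?M)) = range (m x ^^ Suc N)"
    using assms[rule_format, of "Suc N"] assms[rule_format, of "?M + ?M"] by simp
  then have "(m x ^^ Suc N) x \<in> range (m x ^^ (?M + ?M))" by simp
  then obtain c where c: "(m x ^^ Suc N) x = (m x ^^ (?M + ?M)) c" by blast
  have "(m x ^^ ?M) c = 0"
    using idempotent_eq_0[OF funpow_idempotent[OF c]] .
  then show "(m x ^^ Suc N) x = 0"
    by (simp only: c funpow_add comp_apply funpow_mult_0)
qed

end

theorem corollary4p9:
  fixes scale :: "'k::field_char_0 \<Rightarrow> 'v::ab_group_add \<Rightarrow> 'v"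
    and br :: "'v \<Rightarrow> 'v \<Rightarrow> 'v"
    and m :: "'v \<Rightarrow> 'v \<Rightarrow> 'v"
  assumes "\<exists>B. finite_dimensional_vector_space scale B"
    and "lie_algebra scale br"
    and "two_step_nilpotent br"
    and "lie_center br \<subseteq> derived_algebra scale br"
    and "LR_structure scale br m"
    and "\<forall>u \<in> derived_algebra scale br. \<forall>y. m u y = 0"
  shows "LR_complete m"
proof -
  obtain B where "finite_dimensional_vector_space scale B" using assms(1) by blast
  then interpret finite_dimensional_vector_space scale B .
  interpret two_step_LR scale br m
    by (intro two_step_LR.intro two_step_LR_axioms.intro vector_space_axioms assms(2,3,5))
      (use assms(4,6) in blast)
  have "\<exists>k. (m x ^^ k) = (\<lambda>_. 0)" for x
  proof -
    obtain N where "\<forall>n\<ge>N. range (m x ^^ n) = range (m x ^^ N)"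
      using range_funpow_stabilizes[OF linear_mult] by blast
    then show ?thesis using nilpotent_if_range_funpow_stable by blast
  qed
  then show ?thesis unfolding LR_complete_def by blast
qed

end
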